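(* Let $\mathcal X=\mathbb Z^3$ with coordinates $x=(x_{22},x_{11},x_{21})$, equipped with the crystal structure (for $i=0,1,2$): $\mathrm{wt}_0(x)=-2x_{11}$, $\mathrm{wt}_1(x)=2x_{11}-x_{21}-x_{22}$, $\mathrm{wt}_2(x)=2x_{21}+2x_{22}-2x_{11}$; $\varepsilon_0(x)=\max\{x_{21},2x_{11}-x_{22}\}$, $\varepsilon_1(x)=x_{22}-x_{11}$, $\varepsilon_2(x)=\max\{-x_{22},2x_{11}-2x_{22}-x_{21}\}$; $\varphi_i=\varepsilon_i+\mathrm{wt}_i$; for $c\in\mathbb Z$, with $C_2=\max\{c+x_{21}+x_{22},2x_{11}\}-\max\{x_{21}+x_{22},2x_{11}\}$: $e_0^c(x)=(C_2+x_{22}-c,\,x_{11}-c,\,x_{21}-C_2)$, $e_1^c(x)=(x_{22},\,x_{11}+c,\,x_{21})$, $e_2^c(x)=(C_2+x_{22},\,x_{11},\,c+x_{21}-C_2)$; and $\tilde e_i=e_i^{1}$, $\tilde f_i=e_i^{-1}$. Let $B^{2,\infty}$ be the set of $b=(b_{11},b_{12},b_{13},b_{22},b_{23},b_{24})\in\mathbb Z^6$ with $b_{11}+b_{12}+b_{13}=0$, $b_{22}+b_{23}+b_{24}=0$, $b_{11}=b_{22}+b_{23}$, $b_{24}=b_{12}+b_{13}$, with crystal structure (all unlisted entries unchanged): $\tilde e_0$: $b_{11}\mapsto b_{11}-1$, $b_{24}\mapsto b_{24}+1$, and if $b_{23}>b_{12}$ then $b_{23}\mapsto b_{23}-1$,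 $b_{13}\mapsto b_{13}+1$, while if $b_{23}\le b_{12}$ then $b_{22}\mapsto b_{22}-1$, $b_{12}\mapsto b_{12}+1$; $\tilde f_0$: $b_{11}\mapsto b_{11}+1$, $b_{24}\mapsto b_{24}-1$, and if $b_{23}\ge b_{12}$ then $b_{23}\mapsto b_{23}+1$, $b_{13}\mapsto b_{13}-1$, while if $b_{23}<b_{12}$ then $b_{22}\mapsto b_{22}+1$, $b_{12}\mapsto b_{12}-1$; $\tilde e_1$: $b_{11}\mapsto b_{11}+1$, $b_{12}\mapsto b_{12}-1$, $b_{23}\mapsto b_{23}+1$, $b_{24}\mapsto b_{24}-1$; $\tilde f_1$: the inverse changes; $\tilde e_2$: if $b_{12}\ge b_{23}$ then $b_{13}\mapsto b_{13}-1$, $b_{12}\mapsto b_{12}+1$; if $b_{12}<b_{23}$ then $b_{23}\mapsto b_{23}-1$, $b_{22}\mapsto b_{22}+1$; $\tilde f_2$: if $b_{12}>b_{23}$ then $b_{13}\mapsto b_{13}+1$, $b_{12}\mapsto b_{12}-1$; if $b_{12}\le b_{23}$ then $b_{23}\mapsto b_{23}+1$, $b_{22}\mapsto b_{22}-1$; $\varepsilon_0(b)=-b_{24}-\min(b_{12},b_{23})$, $\varphi_0(b)=-b_{11}-\min(b_{12},b_{23})$, $\varepsilon_1(b)=b_{12}$, $\varphi_1(b)=b_{23}$, $\varepsilon_2(b)=b_{13}+\max(b_{23}-b_{12},0)$, $\varphi_2(b)=b_{22}+\max(b_{12}-b_{23},0)$, $\mathrm{wt}_i=\varphi_i-\varepsilon_i$.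 Then the map $\Omega:\mathcal X\to B^{2,\infty}$ given by $b_{11}=x_{11}$, $b_{12}=x_{22}-x_{11}$, $b_{13}=-x_{22}$, $b_{22}=x_{21}$, $b_{23}=x_{11}-x_{21}$, $b_{24}=-x_{11}$ (with inverse $x_{11}=b_{11}$, $x_{21}=b_{22}$, $x_{22}=b_{11}+b_{12}$) is an isomorphism of crystals.
   Context: $\mathcal X$ is the ultra-discretization (tropicalization via $\times\mapsto+$, $/\mapsto-$, $+\mapsto\max$) of the positive geometric crystal for $C_2^{(1)}$ on $(\mathbb C^\times)^3$, and $B^{2,\infty}$ is the limit of a coherent family of perfect crystals for the Langlands dual algebra $D_3^{(2)}$; both are regarded as crystals with index set $\{0,1,2\}$ via the explicit data above. An isomorphism of crystals is a bijection $\Omega$ with $\Omega\circ\tilde e_i=\tilde e_i\circ\Omega$, $\Omega\circ\tilde f_i=\tilde f_i\circ\Omega$, $\varepsilon_i\circ\Omega=\varepsilon_i$, $\varphi_i\circ\Omega=\varphi_i$ and $\mathrm{wt}_i\circ\Omega=\mathrm{wt}_i$ for all $i$. *)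

theory Defs
  imports Main
begin

text \<open>Abstract crystal data (index set given separately): carrier, Kashiwara
operators e~_i, f~_i (total maps on the carrier, as in the two crystals considered),
and the integer-valued functions epsilon_i, phi_i, wt_i.\<close>

record 'a crystal =
  cr_carrier :: "'a set"
  cr_e :: "nat \<Rightarrow> 'a \<Rightarrow> 'a"
  cr_f :: "nat \<Rightarrow> 'a \<Rightarrow> 'a"
  cr_eps :: "nat \<Rightarrow> 'a \<Rightarrow> int"
  cr_phi :: "nat \<Rightarrow> 'a \<Rightarrow> int"
  cr_wt :: "nat \<Rightarrow> 'a \<Rightarrow> int"

definition crystal_iso :: "nat set \<Rightarrow> 'a crystal \<Rightarrow> 'b crystal \<Rightarrow> ('a \<Rightarrow> 'b) \<Rightarrow> bool" where
  "crystal_iso I A B \<Omega> \<longleftrightarrow>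
     bij_betw \<Omega> (cr_carrier A) (cr_carrier B) \<and>
     (\<forall>i\<in>I. \<forall>x\<in>cr_carrier A.
        \<Omega> (cr_e A i x) = cr_e B i (\<Omega> x) \<and>
        \<Omega> (cr_f A i x) = cr_f B i (\<Omega> x) \<and>
        cr_eps B i (\<Omega> x) = cr_eps A i x \<and>
        cr_phi B i (\<Omega> x) = cr_phi A i x \<and>
        cr_wt B i (\<Omega> x) = cr_wt A i x)"

definition X_wt :: "nat \<Rightarrow> int \<times> int \<times> int \<Rightarrow> int" where
  "X_wt i x = (case x of (x22, x11, x21) \<Rightarrow>
     (if i = 0 then -2 * x11
      else if i = 1 then 2 * x11 - x21 - x22
      else 2 * x21 + 2 * x22 - 2 * x11))"

definition X_eps :: "nat \<Rightarrow> int \<times> int \<times> int \<Rightarrow> int" where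
  "X_eps i x = (case x of (x22, x11, x21) \<Rightarrow>
     (if i = 0 then max x21 (2 * x11 - x22)
      else if i = 1 then x22 - x11
      else max (- x22) (2 * x11 - 2 * x22 - x21)))"

definition X_phi :: "nat \<Rightarrow> int \<times> int \<times> int \<Rightarrow> int" where
  "X_phi i x = X_eps i x + X_wt i x"

definition X_C2 :: "int \<Rightarrow> int \<times> int \<times> int \<Rightarrow> int" where
  "X_C2 c x = (case x of (x22, x11, x21) \<Rightarrow>
     max (c + x21 + x22) (2 * x11) - max (x21 + x22) (2 * x11))"

definition X_ec :: "nat \<Rightarrow> int \<Rightarrow> int \<times> int \<times> int \<Rightarrow> int \<times> int \<times> int" where
  "X_ec i c x = (case x of (x22, x11, x21) \<Rightarrow>
     (if i = 0 then (X_C2 c x + x22 - c, x11 - c, x21 - X_C2 c x)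
      else if i = 1 then (x22, x11 + c, x21)
      else (X_C2 c x + x22, x11, c + x21 - X_C2 c x)))"

definition Xcr :: "(int \<times> int \<times> int) crystal" where
  "Xcr = \<lparr> cr_carrier = UNIV,
          cr_e = (\<lambda>i. X_ec i 1),
          cr_f = (\<lambda>i. X_ec i (-1)),
          cr_eps = X_eps, cr_phi = X_phi, cr_wt = X_wt \<rparr>"

type_synonym bel = "int \<times> int \<times> int \<times> int \<times> int \<times> int"

definition B2inf :: "bel set" where
  "B2inf = {(b11, b12, b13, b22, b23, b24).
              b11 + b12 + b13 = 0 \<and> b22 + b23 + b24 = 0 \<and>
              b11 = b22 + b23 \<and> b24 = b12 + b13}"

definition B_e :: "nat \<Rightarrow> bel \<Rightarrow> bel" where
  "B_e i b = (case b of (b11, b12, b13, b22, b23, b24) \<Rightarrow>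
     (if i = 0 then
        (if b23 > b12 then (b11 - 1, b12, b13 + 1, b22, b23 - 1, b24 + 1)
         else (b11 - 1, b12 + 1, b13, b22 - 1, b23, b24 + 1))
      else if i = 1 then (b11 + 1, b12 - 1, b13, b22, b23 + 1, b24 - 1)
      else
        (if b12 \<ge> b23 then (b11, b12 + 1, b13 - 1, b22, b23, b24)
         else (b11, b12, b13, b22 + 1, b23 - 1, b24))))"

definition B_f :: "nat \<Rightarrow> bel \<Rightarrow> bel" where
  "B_f i b = (case b of (b11, b12, b13, b22, b23, b24) \<Rightarrow>
     (if i = 0 then
        (if b23 \<ge> b12 then (b11 + 1, b12, b13 - 1, b22, b23 + 1, b24 - 1)
         else (b11 + 1, b12 - 1, b13, b22 + 1, b23, b24 - 1))
      else if i = 1 then (b11 - 1, b12 + 1, b13, b22, b23 - 1, b24 + 1)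
      else
        (if b12 > b23 then (b11, b12 - 1, b13 + 1, b22, b23, b24)
         else (b11, b12, b13, b22 - 1, b23 + 1, b24))))"

definition B_eps :: "nat \<Rightarrow> bel \<Rightarrow> int" where
  "B_eps i b = (case b of (b11, b12, b13, b22, b23, b24) \<Rightarrow>
     (if i = 0 then - b24 - min b12 b23
      else if i = 1 then b12
      else b13 + max (b23 - b12) 0))"

definition B_phi :: "nat \<Rightarrow> bel \<Rightarrow> int" where
  "B_phi i b = (case b of (b11, b12, b13, b22, b23, b24) \<Rightarrow>
     (if i = 0 then - b11 - min b12 b23
      else if i = 1 then b23
      else b22 + max (b12 - b23) 0))"

definition B_wt :: "nat \<Rightarrow> bel \<Rightarrow> int" where
  "B_wt i b = B_phi i b - B_eps i b"

definition Bcr :: "bel crystal" where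
  "Bcr = \<lparr> cr_carrier = B2inf, cr_e = B_e, cr_f = B_f,
          cr_eps = B_eps, cr_phi = B_phi, cr_wt = B_wt \<rparr>"

definition Omega :: "int \<times> int \<times> int \<Rightarrow> bel" where
  "Omega x = (case x of (x22, x11, x21) \<Rightarrow>
     (x11, x22 - x11, - x22, x21, x11 - x21, - x11))"

end

theory Submission
  imports Defs
begin

text \<open>\<Omega> is affine, so it suffices to match the piecewise-linear data branch by branch.
  For c = \<plusminus>1 the tropical correction term C2 is the indicator of 2 x11 \<le> x21 + x22
  (resp. 2 x11 < x21 + x22), and under \<Omega> this is exactly the condition b23 \<le> b12
  (resp. b23 < b12) selecting the branch of e~_0, f~_0, e~_2, f~_2 on B^{2,\<infinity>}; similarly
  the maxima in \<epsilon>_0, \<epsilon>_2 of X turn into the minima and maxima of b12 and b23.\<close>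

lemma bij_Omega: "bij_betw Omega UNIV B2inf"
  by (rule bij_betw_byWitness[where f'="\<lambda>(b11, b12, b13, b22, b23, b24). (b11 + b12, b11, b22)"])
     (auto simp: Omega_def B2inf_def)

lemma X_C2_one: "X_C2 1 (x22, x11, x21) = (if 2 * x11 \<le> x21 + x22 then 1 else 0)"
  by (simp add: X_C2_def max_def)

lemma X_C2_minus_one: "X_C2 (-1) (x22, x11, x21) = (if 2 * x11 < x21 + x22 then -1 else 0)"
  by (simp add: X_C2_def max_def)

text \<open>Indices beyond 2 fall into the i = 2 branches of all definitions on both sides,
  so the following lemmas need no bound on i.\<close>

lemma Omega_X_e: "Omega (X_ec i 1 x) = B_e i (Omega x)"
  by (cases x) (simp add: X_ec_def X_C2_one Omega_def B_e_def)

lemma Omega_X_f: "Omega (X_ec i (-1) x) = B_f i (Omega x)"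
  by (cases x) (simp add: X_ec_def X_C2_minus_one Omega_def B_f_def)

lemma B_eps_Omega: "B_eps i (Omega x) = X_eps i x"
  by (cases x) (simp add: X_eps_def Omega_def B_eps_def max_def min_def)

lemma B_phi_Omega: "B_phi i (Omega x) = X_phi i x"
  by (cases x) (simp add: X_phi_def X_eps_def X_wt_def Omega_def B_phi_def max_def min_def)

lemma B_wt_Omega: "B_wt i (Omega x) = X_wt i x"
  by (simp add: B_wt_def B_phi_Omega B_eps_Omega X_phi_def)

theorem mainTheorem6:
  shows "crystal_iso {0, 1, 2} Xcr Bcr Omega"
  using bij_Omega
  by (simp add: crystal_iso_def Xcr_def Bcr_def
                Omega_X_e Omega_X_f B_eps_Omega B_phi_Omega B_wt_Omega)

end
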